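(* For every contractor network and every $t\in\mathbb N$, $$d_{TV}\big(\pi,\Pr(\mathbf X^t\in\cdot)\big)\le n\,\|(\mathbf A\mathbf W)^t\|.$$ Consequently, if $G$ is a directed acyclic graph (no directed cycles, no self-loops) and $d>0$ is the maximum number of edges in a directed path of $G$, then $t_{\mathrm{mix}}(\epsilon)\le d$ for all $\epsilon>0$; and for a general contractor network, for every $\epsilon>0$, $$t_{\mathrm{mix}}(\epsilon)\le 2+\frac{2}{1-\|(\mathbf A\mathbf W)^2\|}\log\Big(\frac n\epsilon\Big).$$
   Context: A contractor network is a finite directed graph $G=(\mathcal V,\mathcal E)$ with $n=|\mathcal V|$ nodes, without multiple edges (self-loops and directed cycles allowed in general), in which every node has at least one incident edge. For $i\in\mathcal V$ let $\delta_{\mathrm{in}}(i)=\{j:(j,i)\in\mathcal E\}$ and $\delta_{\mathrm{out}}(i)=\{k:(i,k)\in\mathcal E\}$. A node $i$ is a pure principal if $\delta_{\mathrm{in}}(i)=\emptyset$, a pure obligee if $\delta_{\mathrm{out}}(i)=\emptyset$, and an intermediary otherwise. Each edge $(j,i)\in\mathcal E$ carries a weight $w_{ij}>0$; $w_{ij}=0$ if $(j,i)\notin\mathcal E$; for every $i$ with $\delta_{\mathrm{in}}(i)\neq\emptyset$, $\sum_{j\in\delta_{\mathrm{in}}(i)}w_{ij}=1$; $\mathbf W=(w_{ij})$. Risk scores: $r_i\in(0,1)$ if $i$ is not a pure obligee, $r_i=0$ for pure obligees. Propagation parameters: $\alpha_i=0$ for pure principals, $\alpha_i=1$ for pure obligees,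 $\alpha_i\in(0,1)$ for intermediaries; $\mathbf A=\mathrm{diag}(\alpha_i)$. Failure process $(\mathbf X^t)_{t\in\mathbb N}$ on $\{0,1\}^n$: independent $X_i^0\sim\mathrm{Bernoulli}(r_i)$; for $t\ge0$, conditionally on $(\mathbf X^0,\dots,\mathbf X^t)$ the $X_i^{t+1}$ are independent with $X_i^{t+1}\sim\mathrm{Bernoulli}\big((1-\alpha_i)r_i+\alpha_i\sum_{j\in\delta_{\mathrm{in}}(i)}w_{ij}X_j^t\big)$. This is a Markov chain whose law converges to a unique stationary distribution $\pi$ on $\{0,1\}^n$. For distributions $P,Q$ on $\{0,1\}^n$, $d_{TV}(P,Q)=\max_{S\subseteq\{0,1\}^n}|P(S)-Q(S)|$, and $t_{\mathrm{mix}}(\epsilon)=\inf\{t\ge0:d_{TV}(\pi,\Pr(\mathbf X^t\in\cdot))\le\epsilon\}$. $\|\mathbf M\|$ is the induced $\ell_\infty$ matrix norm (maximum absolute row sum). *)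

theory Defs
  imports "HOL-Probability.Probability"
begin

text \<open>An edge (j,i) in E means j -> i.
  Weights w i j (the entry w_ij of W), risk scores r i, propagation parameters alpha i.
  States of the failure process are functions nat => bool that are False outside 0..<n.\<close>

definition din :: "(nat \<times> nat) set \<Rightarrow> nat \<Rightarrow> nat set" where
  "din E i = {j. (j, i) \<in> E}"

definition dout :: "(nat \<times> nat) set \<Rightarrow> nat \<Rightarrow> nat set" where
  "dout E i = {k. (i, k) \<in> E}"

definition contractor_network ::
  "nat \<Rightarrow> (nat \<times> nat) set \<Rightarrow> (nat \<Rightarrow> nat \<Rightarrow> real) \<Rightarrow> (nat \<Rightarrow> real) \<Rightarrow> (nat \<Rightarrow> real) \<Rightarrow> bool" where
  "contractor_network n E w r alpha \<longleftrightarrow>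
     E \<subseteq> {..<n} \<times> {..<n} \<and>
     (\<forall>i<n. din E i \<noteq> {} \<or> dout E i \<noteq> {}) \<and>
     (\<forall>i<n. \<forall>j<n. ((j, i) \<in> E \<longrightarrow> w i j > 0) \<and> ((j, i) \<notin> E \<longrightarrow> w i j = 0)) \<and>
     (\<forall>i<n. din E i \<noteq> {} \<longrightarrow> (\<Sum>j\<in>din E i. w i j) = 1) \<and>
     (\<forall>i<n. dout E i \<noteq> {} \<longrightarrow> 0 < r i \<and> r i < 1) \<and>
     (\<forall>i<n. dout E i = {} \<longrightarrow> r i = 0) \<and>
     (\<forall>i<n. din E i = {} \<longrightarrow> alpha i = 0) \<and>
     (\<forall>i<n. dout E i = {} \<longrightarrow> alpha i = 1) \<and>
     (\<forall>i<n. din E i \<noteq> {} \<and> dout E i \<noteq> {} \<longrightarrow> 0 < alpha i \<and> alpha i < 1)"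

definition init_pmf :: "nat \<Rightarrow> (nat \<Rightarrow> real) \<Rightarrow> (nat \<Rightarrow> bool) pmf" where
  "init_pmf n r = Pi_pmf {..<n} False (\<lambda>i. bernoulli_pmf (r i))"

definition step_pmf ::
  "nat \<Rightarrow> (nat \<times> nat) set \<Rightarrow> (nat \<Rightarrow> nat \<Rightarrow> real) \<Rightarrow> (nat \<Rightarrow> real) \<Rightarrow> (nat \<Rightarrow> real)
     \<Rightarrow> (nat \<Rightarrow> bool) \<Rightarrow> (nat \<Rightarrow> bool) pmf" where
  "step_pmf n E w r alpha x = Pi_pmf {..<n} False
     (\<lambda>i. bernoulli_pmf ((1 - alpha i) * r i + alpha i * (\<Sum>j\<in>din E i. w i j * (if x j then 1 else 0))))"

primrec law ::
  "nat \<Rightarrow> (nat \<times> nat) set \<Rightarrow> (nat \<Rightarrow> nat \<Rightarrow> real) \<Rightarrow> (nat \<Rightarrow> real) \<Rightarrow> (nat \<Rightarrow> real)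
     \<Rightarrow> nat \<Rightarrow> (nat \<Rightarrow> bool) pmf" where
  "law n E w r alpha 0 = init_pmf n r"
| "law n E w r alpha (Suc t) = bind_pmf (law n E w r alpha t) (step_pmf n E w r alpha)"

definition stationary ::
  "nat \<Rightarrow> (nat \<times> nat) set \<Rightarrow> (nat \<Rightarrow> nat \<Rightarrow> real) \<Rightarrow> (nat \<Rightarrow> real) \<Rightarrow> (nat \<Rightarrow> real)
     \<Rightarrow> (nat \<Rightarrow> bool) pmf \<Rightarrow> bool" where
  "stationary n E w r alpha p \<longleftrightarrow> bind_pmf p (step_pmf n E w r alpha) = p"

definition dTV :: "'a pmf \<Rightarrow> 'a pmf \<Rightarrow> real" where
  "dTV P Q = (SUP S. \<bar>measure_pmf.prob P S - measure_pmf.prob Q S\<bar>)"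

text \<open>Mixing time; infimum of the empty set is +infinity.\<close>
definition tmix :: "'a pmf \<Rightarrow> (nat \<Rightarrow> 'a pmf) \<Rightarrow> real \<Rightarrow> ereal" where
  "tmix p X eps = Inf ((\<lambda>t. ereal (real t)) ` {t. dTV p (X t) \<le> eps})"

text \<open>n x n matrices as functions, indices < n.\<close>
definition AW :: "(nat \<Rightarrow> real) \<Rightarrow> (nat \<Rightarrow> nat \<Rightarrow> real) \<Rightarrow> nat \<Rightarrow> nat \<Rightarrow> real" where
  "AW alpha w i k = alpha i * w i k"

definition matmul :: "nat \<Rightarrow> (nat \<Rightarrow> nat \<Rightarrow> real) \<Rightarrow> (nat \<Rightarrow> nat \<Rightarrow> real) \<Rightarrow> nat \<Rightarrow> nat \<Rightarrow> real" where
  "matmul n M N i k = (\<Sum>j<n. M i j * N j k)"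

primrec matpow :: "nat \<Rightarrow> (nat \<Rightarrow> nat \<Rightarrow> real) \<Rightarrow> nat \<Rightarrow> nat \<Rightarrow> nat \<Rightarrow> real" where
  "matpow n M 0 = (\<lambda>i k. if i = k then 1 else 0)"
| "matpow n M (Suc t) = matmul n (matpow n M t) M"

text \<open>Induced l-infinity norm (maximum absolute row sum); 0 for n = 0.\<close>
definition mnorm :: "nat \<Rightarrow> (nat \<Rightarrow> nat \<Rightarrow> real) \<Rightarrow> real" where
  "mnorm n M = Max (insert 0 {(\<Sum>k<n. \<bar>M i k\<bar>) | i. i < n})"

definition has_path :: "(nat \<times> nat) set \<Rightarrow> nat \<Rightarrow> bool" where
  "has_path E k \<longleftrightarrow> (\<exists>p::nat list. length p = Suc k \<and> (\<forall>i<k. (p ! i, p ! Suc i) \<in> E))"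

end

theory Submission
  imports Defs
begin

(* Run a copy of the chain started in pi next to X^t, coupling each coordinate maximally
   at every step.  If e_t(i) is the probability that the two copies disagree at node i, then
   e_(t+1) <= (AW) e_t entrywise: the failure probabilities of node i in the two copies differ
   by at most the AW-weighted number of in-neighbours on which they disagree.  Hence
   e_t <= (AW)^t e_0, and the coupling inequality bounds the total variation distance by
   sum_i e_t(i) <= n ||(AW)^t||.  If no path has more than d edges, the entry (AW)^d(i,k)
   vanishes unless k is a pure principal, and at pure principals the copies already agree
   at time 0.  Finally ||(AW)^2|| < 1 and submultiplicativity give geometric decay. *)

section \<open>Couplings of probability mass functions\<close>

lemma prob_bind_pmf:
  "measure_pmf.prob (bind_pmf M N) X
     = measure_pmf.expectation M (\<lambda>x. measure_pmf.prob (N x) X)"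
proof -
  have "ennreal (measure_pmf.prob (bind_pmf M N) X)
      = (\<integral>\<^sup>+x. emeasure (N x) X \<partial>M)"
    by (simp add: measure_pmf.emeasure_eq_measure[symmetric])
  also have "\<dots> = (\<integral>\<^sup>+x. ennreal (measure_pmf.prob (N x) X) \<partial>M)"
    by (simp add: measure_pmf.emeasure_eq_measure)
  also have "\<dots> = ennreal (measure_pmf.expectation M (\<lambda>x. measure_pmf.prob (N x) X))"
    by (intro nn_integral_eq_integral measure_pmf.integrable_const_bound[where B=1]) auto
  finally show ?thesis by (simp add: integral_nonneg_AE)
qed

lemma prob_bernoulli_pmf:
  assumes "0 \<le> p" "p \<le> 1"
  shows "measure_pmf.prob (bernoulli_pmf p) A
           = (if True \<in> A then p else 0) + (if False \<in> A then 1 - p else 0)"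
proof -
  have "measure_pmf.prob (bernoulli_pmf p) A
      = measure_pmf.expectation (bernoulli_pmf p) (indicator A)"
    by simp
  also have "\<dots> = indicator A True * p + indicator A False * (1 - p)"
    by (rule integral_bernoulli_pmf[OF assms])
  finally show ?thesis by (simp add: indicator_def)
qed

(* A maximal coupling of two Bernoulli laws.  The divisions by zero for p = 0 or p = 1
   only occur on branches of probability zero. *)
definition bernoulli_coupling :: "real \<Rightarrow> real \<Rightarrow> (bool \<times> bool) pmf" where
  "bernoulli_coupling p q = bind_pmf (bernoulli_pmf p) (\<lambda>a. map_pmf (Pair a)
      (bernoulli_pmf (if a then min p q / p else (q - min p q) / (1 - p))))"

lemma prob_bernoulli_coupling:
  assumes "0 \<le> p" "p \<le> 1" "0 \<le> q" "q \<le> 1"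
  shows "measure_pmf.prob (bernoulli_coupling p q) A
     = p * measure_pmf.prob (bernoulli_pmf (min p q / p)) (Pair True -` A)
       + (1 - p) * measure_pmf.prob (bernoulli_pmf ((q - min p q) / (1 - p)))
                     (Pair False -` A)"
  using assms unfolding bernoulli_coupling_def prob_bind_pmf by (simp add: mult.commute)

lemma bernoulli_coupling_branch_params:
  fixes p q :: real
  assumes "0 \<le> p" "p \<le> 1" "0 \<le> q" "q \<le> 1"
  shows "0 \<le> min p q / p" "min p q / p \<le> 1"
    "0 \<le> (q - min p q) / (1 - p)" "(q - min p q) / (1 - p) \<le> 1"
  using assms by (auto simp: divide_simps)

lemma map_fst_bernoulli_coupling: "map_pmf fst (bernoulli_coupling p q) = bernoulli_pmf p"
  unfolding bernoulli_coupling_def map_bind_pmf by (simp add: map_pmf_comp bind_return_pmf')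

lemma map_snd_bernoulli_coupling:
  assumes "0 \<le> p" "p \<le> 1" "0 \<le> q" "q \<le> 1"
  shows "map_pmf snd (bernoulli_coupling p q) = bernoulli_pmf q"
proof (rule pmf_eqI)
  show "pmf (map_pmf snd (bernoulli_coupling p q)) b = pmf (bernoulli_pmf q) b" for b
    using assms bernoulli_coupling_branch_params[OF assms]
    by (cases b; cases "p = 0"; cases "p = 1")
      (auto simp: pmf_map prob_bernoulli_coupling prob_bernoulli_pmf vimage_def min_def field_simps)
qed

lemma prob_bernoulli_coupling_neq:
  assumes "0 \<le> p" "p \<le> 1" "0 \<le> q" "q \<le> 1"
  shows "measure_pmf.prob (bernoulli_coupling p q) {z. fst z \<noteq> snd z} = \<bar>p - q\<bar>"
  using assms bernoulli_coupling_branch_params[OF assms]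
  by (cases "p = 0"; cases "p = 1")
    (auto simp: prob_bernoulli_coupling prob_bernoulli_pmf vimage_def min_def field_simps)

definition Pi_coupling ::
    "'i set \<Rightarrow> 'a \<times> 'b \<Rightarrow> ('i \<Rightarrow> ('a \<times> 'b) pmf) \<Rightarrow> (('i \<Rightarrow> 'a) \<times> ('i \<Rightarrow> 'b)) pmf" where
  "Pi_coupling I d c = map_pmf (\<lambda>f. (fst \<circ> f, snd \<circ> f)) (Pi_pmf I d c)"

lemma map_fst_Pi_coupling:
  "finite I \<Longrightarrow> map_pmf fst (Pi_coupling I d c) = Pi_pmf I (fst d) (\<lambda>i. map_pmf fst (c i))"
  unfolding Pi_coupling_def by (simp add: map_pmf_comp Pi_pmf_map)

lemma map_snd_Pi_coupling:
  "finite I \<Longrightarrow> map_pmf snd (Pi_coupling I d c) = Pi_pmf I (snd d) (\<lambda>i. map_pmf snd (c i))"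
  unfolding Pi_coupling_def by (simp add: map_pmf_comp Pi_pmf_map)

lemma prob_Pi_coupling_neq:
  assumes "finite I" "i \<in> I"
  shows "measure_pmf.prob (Pi_coupling I d c) {z. fst z i \<noteq> snd z i}
           = measure_pmf.prob (c i) {z. fst z \<noteq> snd z}"
proof -
  have "measure_pmf.prob (Pi_coupling I d c) {z. fst z i \<noteq> snd z i}
      = measure_pmf.prob (map_pmf (\<lambda>f. f i) (Pi_pmf I d c)) {z. fst z \<noteq> snd z}"
    unfolding Pi_coupling_def by (simp add: vimage_def)
  then show ?thesis using assms by (simp add: Pi_pmf_component)
qed

lemma set_Pi_coupling:
  "finite I \<Longrightarrow> z \<in> set_pmf (Pi_coupling I d c) \<Longrightarrow> i \<notin> I \<Longrightarrow> (fst z i, snd z i) = d"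
  unfolding Pi_coupling_def using set_Pi_pmf_subset[of I d c] by auto

lemma dTV_le_prob_neq:
  "dTV (map_pmf fst c) (map_pmf snd c) \<le> measure_pmf.prob c {z. fst z \<noteq> snd z}"
  unfolding dTV_def
proof (rule cSUP_least)
  fix S
  let ?D = "{z. fst z \<noteq> snd z}"
  have bound: "measure_pmf.prob c X \<le> measure_pmf.prob c Y + measure_pmf.prob c ?D"
    if "X \<subseteq> Y \<union> ?D" for X Y
    using measure_pmf.finite_measure_mono[OF that, of c] measure_Un_le[of Y "measure_pmf c" ?D]
    by simp
  have "measure_pmf.prob c (fst -` S) \<le> measure_pmf.prob c (snd -` S) + measure_pmf.prob c ?D"
    "measure_pmf.prob c (snd -` S) \<le> measure_pmf.prob c (fst -` S) + measure_pmf.prob c ?D"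
    by (rule bound; auto)+
  then show "\<bar>measure_pmf.prob (map_pmf fst c) S - measure_pmf.prob (map_pmf snd c) S\<bar>
               \<le> measure_pmf.prob c ?D"
    by simp
qed simp

lemma prob_neq_le_sum_prob_neq:
  assumes "finite I" and agree: "\<And>z i. z \<in> set_pmf c \<Longrightarrow> i \<notin> I \<Longrightarrow> fst z i = snd z i"
  shows "measure_pmf.prob c {z. fst z \<noteq> snd z}
           \<le> (\<Sum>i\<in>I. measure_pmf.prob c {z. fst z i \<noteq> snd z i})"
proof -
  have "measure_pmf.prob c {z. fst z \<noteq> snd z}
      = measure_pmf.prob c ({z. fst z \<noteq> snd z} \<inter> set_pmf c)"
    by (simp add: measure_Int_set_pmf)
  also have "\<dots> \<le> measure_pmf.prob c (\<Union>i\<in>I. {z. fst z i \<noteq> snd z i})"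
    using agree by (intro measure_pmf.finite_measure_mono) (auto simp: fun_eq_iff)
  also have "\<dots> \<le> (\<Sum>i\<in>I. measure_pmf.prob c {z. fst z i \<noteq> snd z i})"
    using assms(1) by (intro measure_pmf.finite_measure_subadditive_finite) auto
  finally show ?thesis .
qed

lemma tmix_le:
  "dTV p (X t) \<le> eps \<Longrightarrow> tmix p X eps \<le> ereal (real t)"
  unfolding tmix_def by (rule Inf_lower) auto

section \<open>Row-sum norm and powers of matrices\<close>

lemma matpow_Suc_0: "i < n \<Longrightarrow> matpow n M (Suc 0) i k = M i k"
  by (simp add: matmul_def if_distrib if_distribR sum.delta cong: if_cong)

lemma matpow_add:
  assumes "i < n" "k < n"
  shows "matpow n M (a + b) i k = matmul n (matpow n M a) (matpow n M b) i k"
  using assms(2)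
proof (induction b arbitrary: k)
  case 0
  then show ?case by (simp add: matmul_def if_distrib if_distribR sum.delta cong: if_cong)
next
  case (Suc b)
  have "matpow n M (a + Suc b) i k
      = (\<Sum>j<n. (\<Sum>l<n. matpow n M a i l * matpow n M b l j) * M j k)"
    using Suc by (simp add: matmul_def)
  also have "\<dots> = (\<Sum>l<n. matpow n M a i l * (\<Sum>j<n. matpow n M b l j * M j k))"
    unfolding sum_distrib_left sum_distrib_right mult.assoc by (rule sum.swap)
  finally show ?case by (simp add: matmul_def)
qed

lemma matpow_Suc_left:
  "i < n \<Longrightarrow> k < n \<Longrightarrow> matpow n M (Suc t) i k = (\<Sum>j<n. M i j * matpow n M t j k)"
  using matpow_add[of i n k M 1 t] by (simp add: matmul_def matpow_Suc_0 del: matpow.simps)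

lemma matpow_nonzero_imp_walk:
  assumes support: "\<And>i j. i < n \<Longrightarrow> j < n \<Longrightarrow> M i j \<noteq> 0 \<Longrightarrow> (j, i) \<in> E"
  shows "k < n \<Longrightarrow> matpow n M t i k \<noteq> 0
           \<Longrightarrow> \<exists>q. length q = Suc t \<and> q ! 0 = k \<and> (\<forall>s<t. (q ! s, q ! Suc s) \<in> E)"
proof (induction t arbitrary: k)
  case 0
  then show ?case by (intro exI[of _ "[k]"]) simp
next
  case (Suc t)
  then obtain j where j: "j < n" "matpow n M t i j \<noteq> 0" "M j k \<noteq> 0"
    by (auto simp: matmul_def elim: sum.not_neutral_contains_not_neutral)
  obtain q where q: "length q = Suc t" "q ! 0 = j" "\<forall>s<t. (q ! s, q ! Suc s) \<in> E"
    using Suc.IH[OF j(1,2)] by blast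
  have "\<forall>s<Suc t. ((k # q) ! s, (k # q) ! Suc s) \<in> E"
    using q support[OF j(1) Suc.prems(1) j(3)] by (auto simp: less_Suc_eq_0_disj)
  with q show ?case by (intro exI[of _ "k # q"]) simp
qed

lemma matpow_eq_0_if_path_length_le:
  assumes support: "\<And>i j. i < n \<Longrightarrow> j < n \<Longrightarrow> M i j \<noteq> 0 \<Longrightarrow> (j, i) \<in> E"
    and paths: "\<forall>l. has_path E l \<longrightarrow> l \<le> t"
    and "(m, k) \<in> E" "k < n"
  shows "matpow n M t i k = 0"
proof (rule ccontr)
  assume "matpow n M t i k \<noteq> 0"
  then obtain q where q: "length q = Suc t" "q ! 0 = k" "\<forall>s<t. (q ! s, q ! Suc s) \<in> E"
    using matpow_nonzero_imp_walk[OF support \<open>k < n\<close>] by blast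
  have "\<forall>s<Suc t. ((m # q) ! s, (m # q) ! Suc s) \<in> E"
    using q \<open>(m, k) \<in> E\<close> by (auto simp: less_Suc_eq_0_disj)
  then have "has_path E (Suc t)"
    unfolding has_path_def using q(1) by (intro exI[of _ "m # q"]) simp
  then show False using paths by fastforce
qed

lemma iterate_le_matpow:
  assumes nonneg: "\<And>i j. i < n \<Longrightarrow> j < n \<Longrightarrow> 0 \<le> M i j"
    and step: "\<And>t i. i < n \<Longrightarrow> v (Suc t) i \<le> (\<Sum>j<n. M i j * v t j)"
  shows "i < n \<Longrightarrow> v t i \<le> (\<Sum>k<n. matpow n M t i k * v 0 k)"
proof (induction t arbitrary: i)
  case 0
  then show ?case by (simp add: if_distrib if_distribR sum.delta cong: if_cong)
next
  case (Suc t)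
  have "v (Suc t) i \<le> (\<Sum>j<n. M i j * v t j)"
    using Suc.prems by (rule step)
  also have "\<dots> \<le> (\<Sum>j<n. M i j * (\<Sum>k<n. matpow n M t j k * v 0 k))"
    using Suc.prems nonneg by (intro sum_mono mult_left_mono Suc.IH) auto
  also have "\<dots> = (\<Sum>k<n. (\<Sum>j<n. M i j * matpow n M t j k) * v 0 k)"
    unfolding sum_distrib_left sum_distrib_right mult.assoc by (rule sum.swap)
  also have "\<dots> = (\<Sum>k<n. matpow n M (Suc t) i k * v 0 k)"
    using Suc.prems by (simp add: matpow_Suc_left del: matpow.simps)
  finally show ?case .
qed

lemma mnorm_eq_Max: "mnorm n M = Max (insert 0 ((\<lambda>i. \<Sum>k<n. \<bar>M i k\<bar>) ` {..<n}))"
proof -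
  have "{(\<Sum>k<n. \<bar>M i k\<bar>) | i. i < n} = (\<lambda>i. \<Sum>k<n. \<bar>M i k\<bar>) ` {..<n}"
    by auto
  then show ?thesis unfolding mnorm_def by simp
qed

lemma row_sum_le_mnorm: "i < n \<Longrightarrow> (\<Sum>k<n. \<bar>M i k\<bar>) \<le> mnorm n M"
  unfolding mnorm_eq_Max by (rule Max_ge) auto

lemma mnorm_nonneg: "0 \<le> mnorm n M"
  unfolding mnorm_eq_Max by (rule Max_ge) auto

lemma mnorm_leI:
  "(\<And>i. i < n \<Longrightarrow> (\<Sum>k<n. \<bar>M i k\<bar>) \<le> c) \<Longrightarrow> 0 \<le> c \<Longrightarrow> mnorm n M \<le> c"
  unfolding mnorm_eq_Max by simp

lemma mnorm_lessI:
  "(\<And>i. i < n \<Longrightarrow> (\<Sum>k<n. \<bar>M i k\<bar>) < c) \<Longrightarrow> 0 < c \<Longrightarrow> mnorm n M < c"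
  unfolding mnorm_eq_Max by simp

lemma mnorm_cong:
  "(\<And>i k. i < n \<Longrightarrow> k < n \<Longrightarrow> M i k = N i k) \<Longrightarrow> mnorm n M = mnorm n N"
  unfolding mnorm_eq_Max
  by (intro arg_cong[where f=Max] arg_cong[where f="insert 0"] image_cong sum.cong) auto

lemma mnorm_matmul_le: "mnorm n (matmul n M N) \<le> mnorm n M * mnorm n N"
proof (rule mnorm_leI)
  fix i assume i: "i < n"
  have "(\<Sum>k<n. \<bar>matmul n M N i k\<bar>) \<le> (\<Sum>k<n. \<Sum>j<n. \<bar>M i j\<bar> * \<bar>N j k\<bar>)"
    unfolding matmul_def by (intro sum_mono order_trans[OF sum_abs]) (simp add: abs_mult)
  also have "\<dots> = (\<Sum>j<n. \<bar>M i j\<bar> * (\<Sum>k<n. \<bar>N j k\<bar>))"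
    unfolding sum_distrib_left by (rule sum.swap)
  also have "\<dots> \<le> (\<Sum>j<n. \<bar>M i j\<bar> * mnorm n N)"
    by (intro sum_mono mult_left_mono row_sum_le_mnorm) auto
  also have "\<dots> \<le> mnorm n M * mnorm n N"
    by (simp add: sum_distrib_right[symmetric] mult_right_mono row_sum_le_mnorm i mnorm_nonneg)
  finally show "(\<Sum>k<n. \<bar>matmul n M N i k\<bar>) \<le> mnorm n M * mnorm n N" .
qed (simp add: mnorm_nonneg)

lemma mnorm_matpow_0_le: "mnorm n (matpow n M 0) \<le> 1"
  by (rule mnorm_leI) (simp_all add: sum.delta cong: if_cong)

lemma mnorm_matpow_mult_le: "mnorm n (matpow n M (m * k)) \<le> mnorm n (matpow n M m) ^ k"
proof (induction k)
  case 0
  then show ?case using mnorm_matpow_0_le by simp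
next
  case (Suc k)
  have "mnorm n (matpow n M (m * Suc k))
      = mnorm n (matmul n (matpow n M (m * k)) (matpow n M m))"
    by (rule mnorm_cong) (simp add: matpow_add[symmetric] add.commute)
  also have "\<dots> \<le> mnorm n (matpow n M (m * k)) * mnorm n (matpow n M m)"
    by (rule mnorm_matmul_le)
  also have "\<dots> \<le> mnorm n (matpow n M m) ^ Suc k"
    using Suc.IH by (simp add: mult.commute mult_left_mono mnorm_nonneg)
  finally show ?case .
qed

lemma power_le_exp_neg:
  fixes q L :: real
  assumes "0 \<le> q" "q < 1"
  shows "q ^ nat \<lceil>L / (1 - q)\<rceil> \<le> exp (- L)"
proof -
  define k where "k = nat \<lceil>L / (1 - q)\<rceil>"
  have "q ^ k \<le> exp (q - 1) ^ k"
    using assms exp_ge_add_one_self[of "q - 1"] by (intro power_mono) auto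
  also have "\<dots> = exp (- ((1 - q) * real k))"
    by (simp add: exp_of_nat_mult[symmetric] algebra_simps)
  also have "\<dots> \<le> exp (- L)"
    using assms real_nat_ceiling_ge[of "L / (1 - q)"] by (simp add: k_def field_simps)
  finally show ?thesis unfolding k_def .
qed

section \<open>Contractor networks\<close>

locale contractor_net =
  fixes n :: nat and E :: "(nat \<times> nat) set" and w :: "nat \<Rightarrow> nat \<Rightarrow> real"
    and r alpha :: "nat \<Rightarrow> real"
  assumes network: "contractor_network n E w r alpha"
begin

lemma edge_bound: "(j, i) \<in> E \<Longrightarrow> i < n \<and> j < n"
  using network unfolding contractor_network_def by auto

lemma weight_nonneg: "i < n \<Longrightarrow> j < n \<Longrightarrow> 0 \<le> w i j"
  using network unfolding contractor_network_def by (metis less_eq_real_def)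

lemma weight_zero: "i < n \<Longrightarrow> j < n \<Longrightarrow> (j, i) \<notin> E \<Longrightarrow> w i j = 0"
  using network unfolding contractor_network_def by blast

lemma risk_range: "i < n \<Longrightarrow> 0 \<le> r i \<and> r i \<le> 1"
  using network unfolding contractor_network_def by (metis less_eq_real_def order_refl zero_le_one)

lemma alpha_range: "i < n \<Longrightarrow> 0 \<le> alpha i \<and> alpha i \<le> 1"
  using network unfolding contractor_network_def by (metis less_eq_real_def order_refl zero_le_one)

lemma alpha_principal: "i < n \<Longrightarrow> din E i = {} \<Longrightarrow> alpha i = 0"
  using network unfolding contractor_network_def by blast

lemma alpha_tail_less_1: "(j, i) \<in> E \<Longrightarrow> alpha j < 1"
proof -
  assume edge: "(j, i) \<in> E"
  then have "j < n" "dout E j \<noteq> {}" using edge_bound by (auto simp: dout_def)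
  then show ?thesis using network unfolding contractor_network_def by fastforce
qed

lemma AW_nonneg: "i < n \<Longrightarrow> j < n \<Longrightarrow> 0 \<le> AW alpha w i j"
  unfolding AW_def using alpha_range weight_nonneg by simp

lemma AW_nonzero_imp_edge: "i < n \<Longrightarrow> j < n \<Longrightarrow> AW alpha w i j \<noteq> 0 \<Longrightarrow> (j, i) \<in> E"
  unfolding AW_def using weight_zero by fastforce

lemma AW_row_sum: "i < n \<Longrightarrow> (\<Sum>j<n. AW alpha w i j) = alpha i"
proof (cases "din E i = {}")
  case False
  assume i: "i < n"
  have "(\<Sum>j<n. w i j) = (\<Sum>j\<in>din E i. w i j)"
    using i edge_bound weight_zero by (intro sum.mono_neutral_right) (auto simp: din_def)
  also have "\<dots> = 1" using network i False unfolding contractor_network_def by blast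
  finally show ?thesis unfolding AW_def by (simp add: sum_distrib_left[symmetric])
qed (simp add: AW_def alpha_principal)

(* AW itself may have row sum 1 (at a pure obligee), but every in-neighbour j of a node
   has an out-edge, hence alpha j < 1, so all row sums of (AW)^2 are below 1. *)
lemma mnorm_AW_square_less_1: "mnorm n (matpow n (AW alpha w) 2) < 1"
proof (rule mnorm_lessI)
  let ?M = "AW alpha w"
  fix i assume i: "i < n"
  have square: "matpow n ?M 2 i k = (\<Sum>j<n. ?M i j * ?M j k)" if "k < n" for k
    using matpow_Suc_left[of i n k ?M 1] i that
    by (simp add: numeral_2_eq_2 matpow_Suc_0 del: matpow.simps)
  have "0 \<le> (\<Sum>j<n. ?M i j * ?M j k)" if "k < n" for k
    using i that AW_nonneg by (intro sum_nonneg mult_nonneg_nonneg) auto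
  with square have "(\<Sum>k<n. \<bar>matpow n ?M 2 i k\<bar>) = (\<Sum>k<n. \<Sum>j<n. ?M i j * ?M j k)"
    by (intro sum.cong) auto
  also have "\<dots> = (\<Sum>j<n. ?M i j * alpha j)"
    by (simp add: sum.swap[of _ "{..<n}"] sum_distrib_left[symmetric] AW_row_sum)
  also have "\<dots> < 1"
  proof (cases "\<exists>j<n. ?M i j \<noteq> 0")
    case True
    then obtain j0 where j0: "j0 < n" "?M i j0 \<noteq> 0" by blast
    have "(\<Sum>j<n. ?M i j * alpha j) < (\<Sum>j<n. ?M i j)"
    proof (rule sum_strict_mono_ex1)
      show "\<forall>j\<in>{..<n}. ?M i j * alpha j \<le> ?M i j"
        using i AW_nonneg alpha_range by (auto intro: mult_left_le)
      have "alpha j0 < 1" using alpha_tail_less_1 AW_nonzero_imp_edge i j0 by blast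
      moreover have "0 < ?M i j0" using AW_nonneg[OF i j0(1)] j0(2) by simp
      ultimately have "?M i j0 * alpha j0 < ?M i j0" by (simp add: mult_less_cancel_left1)
      with j0(1) show "\<exists>j\<in>{..<n}. ?M i j * alpha j < ?M i j" by blast
    qed simp
    also have "\<dots> \<le> 1" using i AW_row_sum alpha_range by simp
    finally show ?thesis .
  qed simp
  finally show "(\<Sum>k<n. \<bar>matpow n ?M 2 i k\<bar>) < 1" .
qed simp

definition fail_prob :: "(nat \<Rightarrow> bool) \<Rightarrow> nat \<Rightarrow> real" where
  "fail_prob x i = (1 - alpha i) * r i + alpha i * (\<Sum>j\<in>din E i. w i j * (if x j then 1 else 0))"

lemma step_pmf_eq:
  "step_pmf n E w r alpha = (\<lambda>x. Pi_pmf {..<n} False (\<lambda>i. bernoulli_pmf (fail_prob x i)))"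
  unfolding step_pmf_def fail_prob_def ..

lemma fail_prob_eq:
  "i < n \<Longrightarrow> fail_prob x i = (1 - alpha i) * r i + (\<Sum>j<n. AW alpha w i j * of_bool (x j))"
proof -
  assume i: "i < n"
  have "(\<Sum>j\<in>din E i. w i j * (if x j then 1 else 0)) = (\<Sum>j<n. w i j * of_bool (x j))"
    using i edge_bound weight_zero by (intro sum.mono_neutral_cong_left) (auto simp: din_def)
  then have "fail_prob x i = (1 - alpha i) * r i + alpha i * (\<Sum>j<n. w i j * of_bool (x j))"
    unfolding fail_prob_def by simp
  then show ?thesis by (simp only: AW_def sum_distrib_left mult.assoc)
qed

lemma fail_prob_principal: "i < n \<Longrightarrow> din E i = {} \<Longrightarrow> fail_prob x i = r i"
  unfolding fail_prob_def by (simp add: alpha_principal)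

lemma fail_prob_range: "i < n \<Longrightarrow> 0 \<le> fail_prob x i \<and> fail_prob x i \<le> 1"
proof -
  assume i: "i < n"
  have "0 \<le> (\<Sum>j<n. AW alpha w i j * of_bool (x j))"
    using i AW_nonneg by (intro sum_nonneg) auto
  moreover have "(\<Sum>j<n. AW alpha w i j * of_bool (x j)) \<le> alpha i"
    using i AW_nonneg by (subst AW_row_sum[OF i, symmetric]) (intro sum_mono, auto)
  moreover have "(1 - alpha i) * r i \<le> 1 - alpha i"
    using i alpha_range risk_range by (simp add: mult_left_le)
  ultimately show ?thesis
    using i alpha_range risk_range by (simp add: fail_prob_eq)
qed

lemma fail_prob_diff_le:
  "i < n \<Longrightarrow>
     \<bar>fail_prob x i - fail_prob y i\<bar> \<le> (\<Sum>j<n. AW alpha w i j * of_bool (x j \<noteq> y j))"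
proof -
  assume i: "i < n"
  have "\<bar>fail_prob x i - fail_prob y i\<bar>
      = \<bar>\<Sum>j<n. AW alpha w i j * (of_bool (x j) - of_bool (y j))\<bar>"
    using i by (simp add: fail_prob_eq sum_subtractf right_diff_distrib)
  also have "\<dots> \<le> (\<Sum>j<n. \<bar>AW alpha w i j * (of_bool (x j) - of_bool (y j))\<bar>)"
    by (rule sum_abs)
  also have "\<dots> = (\<Sum>j<n. AW alpha w i j * of_bool (x j \<noteq> y j))"
    using i AW_nonneg by (intro sum.cong) (auto simp: abs_mult)
  finally show ?thesis .
qed

end

section \<open>The coupled chain\<close>

definition bernoulli_vector_coupling ::
    "nat \<Rightarrow> (nat \<Rightarrow> real) \<Rightarrow> (nat \<Rightarrow> real) \<Rightarrow> ((nat \<Rightarrow> bool) \<times> (nat \<Rightarrow> bool)) pmf" where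
  "bernoulli_vector_coupling n a b =
     Pi_coupling {..<n} (False, False) (\<lambda>i. bernoulli_coupling (a i) (b i))"

lemma map_fst_bernoulli_vector_coupling:
  "map_pmf fst (bernoulli_vector_coupling n a b) = Pi_pmf {..<n} False (\<lambda>i. bernoulli_pmf (a i))"
  unfolding bernoulli_vector_coupling_def
  by (simp add: map_fst_Pi_coupling map_fst_bernoulli_coupling)

lemma map_snd_bernoulli_vector_coupling:
  assumes "\<And>i. i < n \<Longrightarrow> 0 \<le> a i \<and> a i \<le> 1 \<and> 0 \<le> b i \<and> b i \<le> 1"
  shows "map_pmf snd (bernoulli_vector_coupling n a b)
           = Pi_pmf {..<n} False (\<lambda>i. bernoulli_pmf (b i))"
  unfolding bernoulli_vector_coupling_def using assms
  by (auto simp: map_snd_Pi_coupling map_snd_bernoulli_coupling intro: Pi_pmf_cong)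

lemma prob_bernoulli_vector_coupling_neq:
  assumes "i < n" "0 \<le> a i" "a i \<le> 1" "0 \<le> b i" "b i \<le> 1"
  shows "measure_pmf.prob (bernoulli_vector_coupling n a b) {z. fst z i \<noteq> snd z i}
           = \<bar>a i - b i\<bar>"
proof -
  have "measure_pmf.prob (bernoulli_vector_coupling n a b) {z. fst z i \<noteq> snd z i}
      = measure_pmf.prob (bernoulli_coupling (a i) (b i)) {z. fst z \<noteq> snd z}"
    unfolding bernoulli_vector_coupling_def using assms(1) by (intro prob_Pi_coupling_neq) auto
  also have "\<dots> = \<bar>a i - b i\<bar>"
    using assms(2-) by (rule prob_bernoulli_coupling_neq)
  finally show ?thesis .
qed

lemma set_bernoulli_vector_coupling:
  "z \<in> set_pmf (bernoulli_vector_coupling n a b) \<Longrightarrow> n \<le> i \<Longrightarrow> fst z i = snd z i"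
  unfolding bernoulli_vector_coupling_def using set_Pi_coupling[of "{..<n}" z] by fastforce

locale stationary_contractor_net = contractor_net +
  fixes \<pi> :: "(nat \<Rightarrow> bool) pmf"
  assumes stationary: "stationary n E w r alpha \<pi>"
begin

(* The first copy starts one step after pi, which is pi again by stationarity.  At a pure
   principal i it fails with probability fail_prob x i = r i, just like X^0, so the two
   copies are coupled to agree there at time 0. *)
primrec coupled_chain :: "nat \<Rightarrow> ((nat \<Rightarrow> bool) \<times> (nat \<Rightarrow> bool)) pmf" where
  "coupled_chain 0 = bind_pmf \<pi> (\<lambda>x. bernoulli_vector_coupling n (fail_prob x) r)"
| "coupled_chain (Suc t) = bind_pmf (coupled_chain t)
     (\<lambda>z. bernoulli_vector_coupling n (fail_prob (fst z)) (fail_prob (snd z)))"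

definition disagreement :: "nat \<Rightarrow> nat \<Rightarrow> real" where
  "disagreement t i = measure_pmf.prob (coupled_chain t) {z. fst z i \<noteq> snd z i}"

lemma disagreement_range: "0 \<le> disagreement t i \<and> disagreement t i \<le> 1"
  by (simp add: disagreement_def)

lemma map_fst_coupled_chain: "map_pmf fst (coupled_chain t) = \<pi>"
proof (induction t)
  case 0
  show ?case
    using stationary
    by (simp add: stationary_def step_pmf_eq map_bind_pmf map_fst_bernoulli_vector_coupling)
next
  case (Suc t)
  have "map_pmf fst (coupled_chain (Suc t))
      = bind_pmf (map_pmf fst (coupled_chain t)) (step_pmf n E w r alpha)"
    by (simp add: step_pmf_eq map_bind_pmf map_fst_bernoulli_vector_coupling bind_map_pmf)
  with Suc stationary show ?case by (simp add: stationary_def)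
qed

lemma map_snd_coupled_chain: "map_pmf snd (coupled_chain t) = law n E w r alpha t"
proof (induction t)
  case 0
  show ?case
    by (simp add: init_pmf_def map_bind_pmf map_snd_bernoulli_vector_coupling
        fail_prob_range risk_range)
next
  case (Suc t)
  have "map_pmf snd (coupled_chain (Suc t))
      = bind_pmf (map_pmf snd (coupled_chain t)) (step_pmf n E w r alpha)"
    by (simp add: step_pmf_eq map_bind_pmf map_snd_bernoulli_vector_coupling fail_prob_range
        bind_map_pmf)
  with Suc show ?case by simp
qed

lemma dTV_le_sum_disagreement: "dTV \<pi> (law n E w r alpha t) \<le> (\<Sum>i<n. disagreement t i)"
proof -
  have "fst z i = snd z i" if "z \<in> set_pmf (coupled_chain t)" "i \<notin> {..<n}" for z i
  proof -
    from that(1) obtain a b where "z \<in> set_pmf (bernoulli_vector_coupling n a b)"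
      by (cases t) auto
    with that(2) show ?thesis by (simp add: set_bernoulli_vector_coupling)
  qed
  then have "measure_pmf.prob (coupled_chain t) {z. fst z \<noteq> snd z}
      \<le> (\<Sum>i<n. disagreement t i)"
    unfolding disagreement_def by (intro prob_neq_le_sum_prob_neq) auto
  then show ?thesis
    using dTV_le_prob_neq[of "coupled_chain t"]
    by (simp add: map_fst_coupled_chain map_snd_coupled_chain)
qed

lemma disagreement_0_principal:
  assumes "i < n" "din E i = {}"
  shows "disagreement 0 i = 0"
proof -
  have "disagreement 0 i = measure_pmf.expectation \<pi> (\<lambda>x. \<bar>fail_prob x i - r i\<bar>)"
    unfolding disagreement_def coupled_chain.simps prob_bind_pmf
    using assms(1) fail_prob_range risk_range
    by (intro Bochner_Integration.integral_cong refl prob_bernoulli_vector_coupling_neq) auto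
  then show ?thesis using assms by (simp add: fail_prob_principal)
qed

lemma disagreement_Suc_le:
  assumes i: "i < n"
  shows "disagreement (Suc t) i \<le> (\<Sum>j<n. AW alpha w i j * disagreement t j)"
proof -
  let ?D = "\<lambda>j. {z :: (nat \<Rightarrow> bool) \<times> (nat \<Rightarrow> bool). fst z j \<noteq> snd z j}"
  have "disagreement (Suc t) i
      = measure_pmf.expectation (coupled_chain t)
          (\<lambda>z. \<bar>fail_prob (fst z) i - fail_prob (snd z) i\<bar>)"
    unfolding disagreement_def coupled_chain.simps prob_bind_pmf using i fail_prob_range
    by (intro Bochner_Integration.integral_cong refl prob_bernoulli_vector_coupling_neq) auto
  also have "\<dots> \<le> measure_pmf.expectation (coupled_chain t)
                    (\<lambda>z. \<Sum>j<n. AW alpha w i j * indicator (?D j) z)"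
  proof (rule integral_mono)
    have "\<bar>fail_prob x i - fail_prob y i\<bar> \<le> 1" for x y
      using fail_prob_range[OF i, of x] fail_prob_range[OF i, of y] by linarith
    then show
      "integrable (coupled_chain t) (\<lambda>z. \<bar>fail_prob (fst z) i - fail_prob (snd z) i\<bar>)"
      by (intro measure_pmf.integrable_const_bound[where B=1]) auto
    show "integrable (coupled_chain t) (\<lambda>z. \<Sum>j<n. AW alpha w i j * indicator (?D j) z)"
      by (intro Bochner_Integration.integrable_sum integrable_mult_right
          measure_pmf.integrable_const_bound[where B=1]) auto
  qed (use fail_prob_diff_le[OF i] in \<open>simp add: indicator_def\<close>)
  also have "\<dots> = (\<Sum>j<n. AW alpha w i j * disagreement t j)"
    by (subst Bochner_Integration.integral_sum)
      (auto simp: disagreement_def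
        intro!: integrable_mult_right measure_pmf.integrable_const_bound[where B=1])
  finally show ?thesis .
qed

lemma disagreement_le_matpow:
  "i < n \<Longrightarrow> disagreement t i \<le> (\<Sum>k<n. matpow n (AW alpha w) t i k * disagreement 0 k)"
  by (rule iterate_le_matpow[where v = "\<lambda>t i. disagreement t i",
        OF AW_nonneg disagreement_Suc_le])

theorem dTV_law_le_mnorm:
  "dTV \<pi> (law n E w r alpha t) \<le> real n * mnorm n (matpow n (AW alpha w) t)"
proof -
  let ?Q = "matpow n (AW alpha w) t"
  have "disagreement t i \<le> mnorm n ?Q" if i: "i < n" for i
  proof -
    have "disagreement t i \<le> (\<Sum>k<n. ?Q i k * disagreement 0 k)"
      using i by (rule disagreement_le_matpow)
    also have "\<dots> \<le> (\<Sum>k<n. \<bar>?Q i k\<bar>)"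
    proof (rule sum_mono)
      fix k
      have "?Q i k * disagreement 0 k \<le> \<bar>?Q i k\<bar> * disagreement 0 k"
        by (rule mult_right_mono) (simp_all add: disagreement_range)
      also have "\<dots> \<le> \<bar>?Q i k\<bar>"
        by (rule mult_right_le_one_le) (simp_all add: disagreement_range)
      finally show "?Q i k * disagreement 0 k \<le> \<bar>?Q i k\<bar>" .
    qed
    also have "\<dots> \<le> mnorm n ?Q"
      using i by (rule row_sum_le_mnorm)
    finally show ?thesis .
  qed
  then have "(\<Sum>i<n. disagreement t i) \<le> real n * mnorm n ?Q"
    using sum_mono[of "{..<n}" "disagreement t" "\<lambda>_. mnorm n ?Q"] by simp
  with dTV_le_sum_disagreement show ?thesis by (rule order_trans)
qed

theorem dTV_law_le_0_if_path_length_le: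
  assumes paths: "\<forall>k. has_path E k \<longrightarrow> k \<le> d"
  shows "dTV \<pi> (law n E w r alpha d) \<le> 0"
proof -
  have "matpow n (AW alpha w) d i k * disagreement 0 k = 0" if "k < n" for i k
  proof (cases "din E k = {}")
    case True
    then show ?thesis using disagreement_0_principal[OF \<open>k < n\<close>] by simp
  next
    case False
    then obtain m where "(m, k) \<in> E" unfolding din_def by auto
    then show ?thesis
      using matpow_eq_0_if_path_length_le[OF AW_nonzero_imp_edge paths _ \<open>k < n\<close>] by simp
  qed
  then have "disagreement d i \<le> 0" if "i < n" for i
    using disagreement_le_matpow[OF that, of d] by (simp add: sum.neutral)
  then have "(\<Sum>i<n. disagreement d i) \<le> 0"
    by (intro sum_nonpos) simp
  with dTV_le_sum_disagreement show ?thesis by (rule order_trans)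
qed

theorem tmix_le_log_bound:
  assumes eps: "0 < eps" "eps \<le> real n"
  shows "tmix \<pi> (law n E w r alpha) eps
           \<le> ereal (2 + 2 / (1 - mnorm n (matpow n (AW alpha w) 2)) * ln (real n / eps))"
proof -
  define q where "q = mnorm n (matpow n (AW alpha w) 2)"
  define L where "L = ln (real n / eps)"
  define k where "k = nat \<lceil>L / (1 - q)\<rceil>"
  have q: "0 \<le> q" "q < 1" unfolding q_def using mnorm_nonneg mnorm_AW_square_less_1 by auto
  have "dTV \<pi> (law n E w r alpha (2 * k))
      \<le> real n * mnorm n (matpow n (AW alpha w) (2 * k))"
    by (rule dTV_law_le_mnorm)
  also have "\<dots> \<le> real n * q ^ k"
    unfolding q_def by (intro mult_left_mono mnorm_matpow_mult_le) auto
  also have "\<dots> \<le> real n * exp (- L)"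
    unfolding k_def using q by (intro mult_left_mono power_le_exp_neg) auto
  also have "\<dots> = eps"
    unfolding L_def using eps by (simp add: exp_minus)
  finally have "tmix \<pi> (law n E w r alpha) eps \<le> ereal (real (2 * k))"
    by (rule tmix_le)
  also have "real k \<le> L / (1 - q) + 1"
    unfolding k_def using eps q by (simp add: L_def real_nat_ceiling_ge)
  then have "ereal (real (2 * k)) \<le> ereal (2 + 2 / (1 - q) * L)"
    by simp
  finally show ?thesis unfolding q_def L_def .
qed

end

theorem mainTheorem11:
  fixes n :: nat and E :: "(nat \<times> nat) set" and w :: "nat \<Rightarrow> nat \<Rightarrow> real"
    and r alpha :: "nat \<Rightarrow> real" and \<pi> :: "(nat \<Rightarrow> bool) pmf"
  assumes "contractor_network n E w r alpha"
    and "stationary n E w r alpha \<pi>"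
  shows "(\<forall>t. dTV \<pi> (law n E w r alpha t) \<le> real n * mnorm n (matpow n (AW alpha w) t))
    \<and> (\<forall>d. acyclic E \<and> d > 0 \<and> has_path E d \<and> (\<forall>k. has_path E k \<longrightarrow> k \<le> d) \<longrightarrow>
           (\<forall>eps > 0. tmix \<pi> (law n E w r alpha) eps \<le> ereal (real d)))
    \<and> (\<forall>eps. 0 < eps \<and> eps \<le> real n \<longrightarrow>
           tmix \<pi> (law n E w r alpha) eps
             \<le> ereal (2 + 2 / (1 - mnorm n (matpow n (AW alpha w) 2)) * ln (real n / eps)))"
proof -
  interpret stationary_contractor_net n E w r alpha \<pi>
    using assms by unfold_locales
  show ?thesis
  proof (intro conjI allI impI)
    fix d :: nat and eps :: real
    assume "acyclic E \<and> d > 0 \<and> has_path E d \<and> (\<forall>k. has_path E k \<longrightarrow> k \<le> d)" "eps > 0"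
    then have "dTV \<pi> (law n E w r alpha d) \<le> eps"
      using dTV_law_le_0_if_path_length_le[of d] by force
    then show "tmix \<pi> (law n E w r alpha) eps \<le> ereal (real d)"
      by (rule tmix_le)
  qed (use dTV_law_le_mnorm tmix_le_log_bound in auto)
qed

end
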